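(* Let $n\ge p$, $\nu>0$, $\boldsymbol\eta\in\mathbb R^p$ with $\max_j\eta_j<1$, and $\boldsymbol d\sim$ IMDY$(\nu,\boldsymbol\eta)$. Fix $d_2,\dots,d_p$, let $g_1(d_1)=\exp(\nu\eta_1d_1)/\left[{}_0F_1\!\left(\tfrac n2,\tfrac{D^2}{4}\right)\right]^\nu$ be the unnormalized conditional density of $d_1$ given $(d_2,\dots,d_p)$, and let $m$ be its mode. If $\epsilon>0$ and $B>m$ satisfy $g_1(B)/g_1(m)<\epsilon$, then $P(d_1>B\mid d_2,\dots,d_p)<\epsilon$.
   Context: $D=\mathrm{diag}(d_1,\dots,d_p)$; $\mathcal V_{n,p}=\{X\in\mathbb R^{n\times p}:X^TX=I_p\}$ with normalized Haar probability measure $[dX]$; ${}_0F_1\!\left(\tfrac n2,\tfrac{D^2}{4}\right)=\int_{\mathcal V_{n,p}}\exp\big(\sum_j d_jX_{jj}\big)[dX]$. IMDY$(\nu,\boldsymbol\eta)$ is the distribution on $\mathbb R_+^p$ with Lebesgue density proportional to $\exp(\nu\boldsymbol\eta^T\boldsymbol d)/[{}_0F_1(\tfrac n2,\tfrac{D^2}4)]^\nu$. *)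

theory Defs
  imports "HOL-Probability.Probability"
begin

text \<open>Real n x p matrices are represented as functions on index pairs
  (row k < n, column j < p), extensional outside the index set, with the
  product Lebesgue-Borel measure space.\<close>

definition mat_space :: "nat \<Rightarrow> nat \<Rightarrow> (nat \<times> nat \<Rightarrow> real) measure" where
  "mat_space n p = PiM ({..<n} \<times> {..<p}) (\<lambda>_. lborel)"

definition stiefel :: "nat \<Rightarrow> nat \<Rightarrow> (nat \<times> nat \<Rightarrow> real) set" where
  "stiefel n p = {X \<in> extensional ({..<n} \<times> {..<p}).
     \<forall>i<p. \<forall>j<p. (\<Sum>k<n. X (k,i) * X (k,j)) = (if i = j then 1 else 0)}"

definition orthogonal_mat :: "nat \<Rightarrow> (nat \<Rightarrow> nat \<Rightarrow> real) \<Rightarrow> bool" where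
  "orthogonal_mat n Q \<longleftrightarrow>
     (\<forall>i<n. \<forall>j<n. (\<Sum>k<n. Q k i * Q k j) = (if i = j then 1 else 0))"

definition lmult :: "nat \<Rightarrow> nat \<Rightarrow> (nat \<Rightarrow> nat \<Rightarrow> real) \<Rightarrow> (nat \<times> nat \<Rightarrow> real) \<Rightarrow> (nat \<times> nat \<Rightarrow> real)" where
  "lmult n p Q X = restrict (\<lambda>(k,j). \<Sum>l<n. Q k l * X (l,j)) ({..<n} \<times> {..<p})"

definition haar_stiefel :: "nat \<Rightarrow> nat \<Rightarrow> (nat \<times> nat \<Rightarrow> real) measure" where
  "haar_stiefel n p = (THE \<mu>. prob_space \<mu> \<and> sets \<mu> = sets (mat_space n p)
     \<and> emeasure \<mu> (stiefel n p) = 1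
     \<and> (\<forall>Q. orthogonal_mat n Q \<longrightarrow> distr \<mu> (mat_space n p) (lmult n p Q) = \<mu>))"

text \<open>0F1(n/2, D^2/4) = integral over V_{n,p} of exp(sum_j d_j X_jj) [dX];
  indices are 0-based (d_1 is d 0).\<close>
definition hyp0F1 :: "nat \<Rightarrow> nat \<Rightarrow> (nat \<Rightarrow> real) \<Rightarrow> real" where
  "hyp0F1 n p d = (\<integral>X. exp (\<Sum>j<p. d j * X (j,j)) \<partial>haar_stiefel n p)"

end

theory Submission
  imports Defs
begin

text \<open>As a function of \<open>d\<^sub>1\<close>, \<open>\<^sub>0F\<^sub>1\<close> is a Laplace transform
  \<open>\<integral> exp (d\<^sub>1 a + b)\<close>, hence log-convex by Hoelder's inequality; so the conditional
  density \<open>g\<close> is log-concave. For \<open>m < B < x\<close>, log-concavity gives the exchange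
  inequality \<open>g x g m \<le> g B g (x - B + m)\<close>. Integrating over \<open>x > B\<close> bounds the
  tail mass times \<open>g m\<close> by \<open>g B\<close> times the mass of \<open>(m, \<infinity>)\<close>, i.e. the
  tail probability by \<open>g B / g m\<close>.\<close>

lemma borel_measurable_of_integrable_exp:
  fixes f :: "'a \<Rightarrow> real"
  assumes "integrable M (\<lambda>x. exp (f x))"
  shows "f \<in> borel_measurable M"
proof -
  have "(\<lambda>x. ln (exp (f x))) \<in> borel_measurable M"
    using assms by measurable
  then show ?thesis by simp
qed

lemma integrable_exp_convex_comb:
  fixes f h :: "'a \<Rightarrow> real"
  assumes f: "integrable M (\<lambda>x. exp (f x))" and h: "integrable M (\<lambda>x. exp (h x))"
    and "0 \<le> t" "t \<le> 1"
  shows "integrable M (\<lambda>x. exp ((1 - t) * f x + t * h x))"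
proof (rule Bochner_Integration.integrable_bound)
  show "integrable M (\<lambda>x. (1 - t) * exp (f x) + t * exp (h x))"
    using f h by simp
  show "(\<lambda>x. exp ((1 - t) * f x + t * h x)) \<in> borel_measurable M"
    using f[THEN borel_measurable_of_integrable_exp] h[THEN borel_measurable_of_integrable_exp]
    by measurable
  show "AE x in M. norm (exp ((1 - t) * f x + t * h x)) \<le> norm ((1 - t) * exp (f x) + t * exp (h x))"
    using convex_onD[OF exp_convex, of t] assms by (auto intro!: AE_I2)
qed

lemma integral_exp_convex_comb_pos:
  fixes f h :: "'a \<Rightarrow> real"
  assumes f: "integrable M (\<lambda>x. exp (f x))" and h: "integrable M (\<lambda>x. exp (h x))"
    and pos: "0 < (\<integral>x. exp (f x) \<partial>M)" and "0 \<le> t" "t \<le> 1"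
  shows "0 < (\<integral>x. exp ((1 - t) * f x + t * h x) \<partial>M)"
proof (rule ccontr)
  assume "\<not> ?thesis"
  then have "AE x in M. exp ((1 - t) * f x + t * h x) = 0"
    using integral_nonneg_eq_0_iff_AE[OF integrable_exp_convex_comb[OF f h \<open>0 \<le> t\<close> \<open>t \<le> 1\<close>]]
    by (smt (verit) integral_nonneg_AE AE_I2 exp_ge_zero)
  then have "AE x in M. False" by simp
  then have "(\<integral>x. exp (f x) \<partial>M) = (\<integral>x. 0 \<partial>M)"
    using borel_measurable_integrable[OF f] by (intro integral_cong_AE) (auto elim: AE_mp)
  with pos show False by simp
qed

text \<open>Hoelder's inequality for exponentials: after normalising both integrals to 1 it is
  the integrated pointwise convexity of exp.\<close>
lemma ln_integral_exp_convex_comb_le: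
  fixes f h :: "'a \<Rightarrow> real"
  assumes f: "integrable M (\<lambda>x. exp (f x))" and h: "integrable M (\<lambda>x. exp (h x))"
    and pos_f: "0 < (\<integral>x. exp (f x) \<partial>M)" and pos_h: "0 < (\<integral>x. exp (h x) \<partial>M)"
    and t: "0 \<le> t" "t \<le> 1"
  shows "ln (\<integral>x. exp ((1 - t) * f x + t * h x) \<partial>M)
    \<le> (1 - t) * ln (\<integral>x. exp (f x) \<partial>M) + t * ln (\<integral>x. exp (h x) \<partial>M)"
proof -
  define Lf where "Lf = ln (\<integral>x. exp (f x) \<partial>M)"
  define Lh where "Lh = ln (\<integral>x. exp (h x) \<partial>M)"
  define I where "I = (\<integral>x. exp ((1 - t) * f x + t * h x) \<partial>M)"
  have shift: "exp ((1 - t) * (f x - Lf) + t * (h x - Lh))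
      = exp ((1 - t) * f x + t * h x) * exp (- ((1 - t) * Lf + t * Lh))" for x
    by (simp add: exp_add[symmetric] algebra_simps)
  have "I * exp (- ((1 - t) * Lf + t * Lh))
      = (\<integral>x. exp ((1 - t) * (f x - Lf) + t * (h x - Lh)) \<partial>M)"
    unfolding I_def shift by simp
  also have "\<dots> \<le> (\<integral>x. (1 - t) * exp (f x - Lf) + t * exp (h x - Lh) \<partial>M)"
  proof (rule integral_mono)
    show "integrable M (\<lambda>x. exp ((1 - t) * (f x - Lf) + t * (h x - Lh)))"
      unfolding shift using integrable_exp_convex_comb[OF f h t] by simp
    show "integrable M (\<lambda>x. (1 - t) * exp (f x - Lf) + t * exp (h x - Lh))"
      using f h by (simp add: exp_diff)
    show "exp ((1 - t) * (f x - Lf) + t * (h x - Lh)) \<le> (1 - t) * exp (f x - Lf) + t * exp (h x - Lh)"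
      for x using convex_onD[OF exp_convex, of t] t by simp
  qed
  also have "\<dots> = 1"
    using f h pos_f pos_h by (simp add: exp_diff Lf_def Lh_def)
  finally have "I \<le> exp ((1 - t) * Lf + t * Lh)"
    by (simp only: exp_minus divide_le_eq flip: divide_inverse) simp
  moreover have "0 < I"
    unfolding I_def by (rule integral_exp_convex_comb_pos[OF f h pos_f t])
  ultimately show ?thesis
    unfolding I_def[symmetric] Lf_def[symmetric] Lh_def[symmetric]
    by (metis ln_exp ln_le_cancel_iff exp_gt_zero)
qed

lemma exp_affine_convex_comb:
  "exp (((1 - t) * v + t * w) * a + b) = exp ((1 - t) * (v * a + b) + t * (w * a + b))"
  for t v w a b :: real
  by (simp add: algebra_simps)

lemma integral_exp_affine_pos_between:
  fixes a b :: "'a \<Rightarrow> real"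
  assumes F: "\<And>v. F v = (\<integral>x. exp (v * a x + b x) \<partial>M)"
    and pos: "0 < F u" "0 < F w" and v: "u \<le> v" "v \<le> w"
  shows "0 < F v"
proof (cases "u = w")
  case False
  define t where "t = (v - u) / (w - u)"
  have t: "0 \<le> t" "t \<le> 1" using v False by (auto simp: t_def field_simps)
  have "t * (w - u) = v - u" using False by (simp add: t_def)
  then have v_eq: "v = (1 - t) * u + t * w" by (simp add: algebra_simps)
  have "integrable M (\<lambda>x. exp (u * a x + b x))" "integrable M (\<lambda>x. exp (w * a x + b x))"
    using pos not_integrable_integral_eq unfolding F by force+
  from integral_exp_convex_comb_pos[OF this _ t] pos show ?thesis
    unfolding F v_eq exp_affine_convex_comb by simp
qed (use pos v in simp)

lemma convex_on_ln_integral_exp_affine: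
  fixes a b :: "'a \<Rightarrow> real"
  assumes F: "\<And>v. F v = (\<integral>x. exp (v * a x + b x) \<partial>M)"
    and pos: "0 < F u" "0 < F w"
  shows "convex_on {u..w} (\<lambda>v. ln (F v))"
proof (rule convex_onI)
  fix t v1 v2 :: real assume t: "0 < t" "t < 1" and v: "v1 \<in> {u..w}" "v2 \<in> {u..w}"
  have pos_v: "0 < F v1" "0 < F v2"
    using integral_exp_affine_pos_between[OF F pos] v by auto
  then have "integrable M (\<lambda>x. exp (v1 * a x + b x))" "integrable M (\<lambda>x. exp (v2 * a x + b x))"
    using not_integrable_integral_eq unfolding F by force+
  from ln_integral_exp_convex_comb_le[OF this, of t] pos_v t
  show "ln (F ((1 - t) *\<^sub>R v1 + t *\<^sub>R v2)) \<le> (1 - t) * ln (F v1) + t * ln (F v2)"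
    unfolding F real_scaleR_def exp_affine_convex_comb by simp
qed simp

lemma convex_on_interval_sum_le_endpoints:
  fixes \<phi> :: "real \<Rightarrow> real"
  assumes "convex_on {a..b} \<phi>" and "a \<le> s" "s \<le> b" and "s + s' = a + b"
  shows "\<phi> s + \<phi> s' \<le> \<phi> a + \<phi> b"
proof (cases "a = b")
  case False
  define t where "t = (s - a) / (b - a)"
  have t: "0 \<le> t" "t \<le> 1" using assms False by (auto simp: t_def field_simps)
  have "t * (b - a) = s - a" using False by (simp add: t_def)
  then have s: "s = (1 - t) *\<^sub>R a + t *\<^sub>R b" and s': "s' = (1 - (1 - t)) *\<^sub>R a + (1 - t) *\<^sub>R b"
    using assms(4) by (simp_all add: algebra_simps)
  have "\<phi> s \<le> (1 - t) * \<phi> a + t * \<phi> b"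
    unfolding s by (rule convex_onD[OF assms(1)]) (use t assms in auto)
  moreover have "\<phi> s' \<le> (1 - (1 - t)) * \<phi> a + (1 - t) * \<phi> b"
    unfolding s' by (rule convex_onD[OF assms(1)]) (use t assms in auto)
  ultimately show ?thesis by (simp add: algebra_simps)
qed (use assms in simp)

lemma exp_over_integral_exp_powr_exchange:
  fixes a b :: "'a \<Rightarrow> real"
  assumes F: "\<And>v. F v = (\<integral>x. exp (v * a x + b x) \<partial>M)"
    and g: "\<And>v. g v = exp (c * v) / F v powr \<nu>"
    and "0 \<le> \<nu>" and "m \<le> B" and "B \<le> y"
  shows "g y * g m \<le> g B * g (y - B + m)"
proof -
  have F_nonneg: "0 \<le> F v" for v
    unfolding F by (rule integral_nonneg_AE) simp
  have g_nonneg: "0 \<le> g v" for v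
    unfolding g by simp
  show ?thesis
  proof (cases "0 < F m \<and> 0 < F y")
    case False
    then have "F y = 0 \<or> F m = 0"
      using F_nonneg[of m] F_nonneg[of y] by linarith
    then have "g y = 0 \<or> g m = 0"
      \<comment> \<open>\<open>0 powr \<nu> = 0\<close> and division by 0 yields 0\<close>
      unfolding g by auto
    then show ?thesis
      using g_nonneg by auto
  next
    case True
    have pos: "0 < F B" "0 < F (y - B + m)"
      using integral_exp_affine_pos_between[OF F, of m y] True \<open>m \<le> B\<close> \<open>B \<le> y\<close> by simp_all
    have g_exp: "g v = exp (c * v - \<nu> * ln (F v))" if "0 < F v" for v
      using that unfolding g by (simp add: powr_def exp_diff)
    have "ln (F B) + ln (F (y - B + m)) \<le> ln (F m) + ln (F y)"
      using convex_on_interval_sum_le_endpoints[OF convex_on_ln_integral_exp_affine[OF F, of m y]]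
        True \<open>m \<le> B\<close> \<open>B \<le> y\<close> by simp
    then have "\<nu> * (ln (F B) + ln (F (y - B + m))) \<le> \<nu> * (ln (F m) + ln (F y))"
      using \<open>0 \<le> \<nu>\<close> by (rule mult_left_mono)
    then have "(c * y - \<nu> * ln (F y)) + (c * m - \<nu> * ln (F m))
        \<le> (c * B - \<nu> * ln (F B)) + (c * (y - B + m) - \<nu> * ln (F (y - B + m)))"
      by (simp add: algebra_simps)
    then show ?thesis
      using True pos by (simp add: g_exp exp_add[symmetric])
  qed
qed

lemma set_integral_mono_set_nonneg:
  fixes f :: "'a \<Rightarrow> real"
  assumes f: "set_integrable M B f" and A: "A \<in> sets M" "A \<subseteq> B"
    and nonneg: "\<And>x. x \<in> B \<Longrightarrow> 0 \<le> f x"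
  shows "(LINT x:A|M. f x) \<le> (LINT x:B|M. f x)"
  unfolding set_lebesgue_integral_def
proof (rule integral_mono)
  show "integrable M (\<lambda>x. indicator A x *\<^sub>R f x)"
    using set_integrable_subset[OF f A] unfolding set_integrable_def .
  show "integrable M (\<lambda>x. indicator B x *\<^sub>R f x)"
    using f unfolding set_integrable_def .
  show "indicator A x *\<^sub>R f x \<le> indicator B x *\<^sub>R f x" for x
    using A nonneg by (auto simp: indicator_def)
qed

lemma
  fixes f :: "real \<Rightarrow> real"
  shows set_integrable_greaterThan_shift:
      "set_integrable lborel {a<..} (\<lambda>x. f (x - a + b)) \<longleftrightarrow> set_integrable lborel {b<..} f"
    and set_integral_greaterThan_shift:
      "(LINT x:{a<..}|lborel. f (x - a + b)) = (LINT x:{b<..}|lborel. f x)"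
proof -
  have shift: "indicator {b<..} ((b - a) + 1 * x) *\<^sub>R f ((b - a) + 1 * x)
      = indicator {a<..} x *\<^sub>R f (x - a + b)" for x
    by (auto simp: indicator_def algebra_simps)
  show "set_integrable lborel {a<..} (\<lambda>x. f (x - a + b)) \<longleftrightarrow> set_integrable lborel {b<..} f"
    using lborel_integrable_real_affine_iff[of 1 "\<lambda>x. indicator {b<..} x *\<^sub>R f x" "b - a"]
    unfolding set_integrable_def shift by simp
  show "(LINT x:{a<..}|lborel. f (x - a + b)) = (LINT x:{b<..}|lborel. f x)"
    using lborel_integral_real_affine[of 1 "\<lambda>x. indicator {b<..} x *\<^sub>R f x" "b - a"]
    unfolding set_lebesgue_integral_def shift by simp
qed

lemma tail_integral_mult_le:
  fixes g :: "real \<Rightarrow> real"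
  assumes nonneg: "\<And>x. 0 \<le> g x" and "0 \<le> m" "m \<le> B"
    and int: "set_integrable lborel {0..} g"
    and exch: "\<And>x. B < x \<Longrightarrow> g x * g m \<le> g B * g (x - B + m)"
  shows "(LINT x:{B<..}|lborel. g x) * g m \<le> g B * (LINT x:{0..}|lborel. g x)"
proof -
  have int_m: "set_integrable lborel {m<..} g"
    by (rule set_integrable_subset[OF int]) (use \<open>0 \<le> m\<close> in auto)
  have int_B: "set_integrable lborel {B<..} g"
    by (rule set_integrable_subset[OF int]) (use assms in auto)
  have int_shift: "set_integrable lborel {B<..} (\<lambda>x. g (x - B + m))"
    using int_m by (simp add: set_integrable_greaterThan_shift)
  have "(LINT x:{B<..}|lborel. g x) * g m = (LINT x:{B<..}|lborel. g x * g m)"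
    by simp
  also have "\<dots> \<le> (LINT x:{B<..}|lborel. g B * g (x - B + m))"
    using int_B int_shift exch by (intro set_integral_mono) auto
  also have "\<dots> = g B * (LINT x:{m<..}|lborel. g x)"
    by (simp add: set_integral_greaterThan_shift)
  also have "\<dots> \<le> g B * (LINT x:{0..}|lborel. g x)"
    using set_integral_mono_set_nonneg[OF int, of "{m<..}"] nonneg \<open>0 \<le> m\<close>
    by (intro mult_left_mono) (auto simp: subset_eq)
  finally show ?thesis .
qed

lemma tail_integral_ratio_le:
  fixes g :: "real \<Rightarrow> real"
  assumes nonneg: "\<And>x. 0 \<le> g x" and "0 \<le> m" "m < B"
    and mode: "\<And>x. 0 \<le> x \<Longrightarrow> g x \<le> g m"
    and exch: "\<And>x. B < x \<Longrightarrow> g x * g m \<le> g B * g (x - B + m)"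
  shows "(LINT x:{B<..}|lborel. g x) / (LINT x:{0..}|lborel. g x) \<le> g B / g m"
proof -
  define T where "T = (LINT x:{B<..}|lborel. g x)"
  define Tot where "Tot = (LINT x:{0..}|lborel. g x)"
  have "0 \<le> Tot"
    unfolding Tot_def set_lebesgue_integral_def
    by (rule integral_nonneg_AE) (simp add: nonneg)
  consider "g m = 0" | "Tot = 0" | "0 < g m" "0 < Tot"
    using nonneg[of m] \<open>0 \<le> Tot\<close> by fastforce
  then show ?thesis
  proof cases
    case 1
    then have "g x = 0" if "B < x" for x
      using mode[of x] nonneg[of x] \<open>0 \<le> m\<close> \<open>m < B\<close> that by simp
    then have "(\<lambda>x. indicator {B<..} x *\<^sub>R g x) = (\<lambda>x. 0::real)"
      by (auto simp: indicator_def)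
    then have "T = 0"
      by (simp add: T_def set_lebesgue_integral_def)
    then show ?thesis
      unfolding T_def[symmetric] using nonneg[of B] nonneg[of m] by simp
  next
    case 2
    then show ?thesis
      using nonneg[of B] nonneg[of m] unfolding Tot_def by simp
  next
    case 3
    then have "set_integrable lborel {0..} g"
      using not_integrable_integral_eq
      unfolding Tot_def set_lebesgue_integral_def set_integrable_def by force
    from tail_integral_mult_le[OF nonneg \<open>0 \<le> m\<close> _ this exch] \<open>m < B\<close>
    have "T * g m \<le> g B * Tot"
      unfolding T_def Tot_def by simp
    with 3 show ?thesis
      unfolding T_def[symmetric] Tot_def[symmetric]
      by (simp add: divide_le_eq le_divide_eq mult.commute mult.left_commute)
  qed
qed

lemma hyp0F1_update_first:
  assumes "1 \<le> p"
  shows "hyp0F1 n p (d(0 := x))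
    = (\<integral>X. exp (x * X (0,0) + (\<Sum>j\<in>{1..<p}. d j * X (j,j))) \<partial>haar_stiefel n p)"
proof -
  have split: "{..<p} = insert 0 {1..<p}" using assms by auto
  have tail: "(\<Sum>j\<in>{1..<p}. (d(0 := x)) j * X (j,j)) = (\<Sum>j\<in>{1..<p}. d j * X (j,j))"
    for X :: "nat \<times> nat \<Rightarrow> real"
    by (rule sum.cong) auto
  have "(\<Sum>j<p. (d(0 := x)) j * X (j,j)) = x * X (0,0) + (\<Sum>j\<in>{1..<p}. d j * X (j,j))"
    for X :: "nat \<times> nat \<Rightarrow> real"
    unfolding split by (simp add: tail)
  then show ?thesis
    unfolding hyp0F1_def by simp
qed

theorem lemma11:
  fixes n p :: nat and \<nu> \<epsilon> B m :: real and \<eta> d :: "nat \<Rightarrow> real"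
    and g :: "real \<Rightarrow> real"
  assumes "1 \<le> p" and "p \<le> n" and "\<nu> > 0"
    and "\<forall>j<p. \<eta> j < 1"
    and "\<forall>j\<in>{1..<p}. d j \<ge> 0"
    and "g = (\<lambda>x. exp (\<nu> * \<eta> 0 * x) / (hyp0F1 n p (d(0 := x))) powr \<nu>)"
    and "m \<ge> 0" and "\<forall>x\<ge>0. g x \<le> g m"
    and "\<epsilon> > 0" and "B > m" and "g B / g m < \<epsilon>"
  shows "(LINT x:{B<..}|lborel. g x) / (LINT x:{0..}|lborel. g x) < \<epsilon>"
proof -
  note F = hyp0F1_update_first[OF \<open>1 \<le> p\<close>]
  have g: "\<And>x. g x = exp ((\<nu> * \<eta> 0) * x) / hyp0F1 n p (d(0 := x)) powr \<nu>"
    using assms(6) by simp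
  have exch: "\<And>x. B < x \<Longrightarrow> g x * g m \<le> g B * g (x - B + m)"
    using exp_over_integral_exp_powr_exchange[OF F g] \<open>\<nu> > 0\<close> \<open>B > m\<close> by simp
  have "(LINT x:{B<..}|lborel. g x) / (LINT x:{0..}|lborel. g x) \<le> g B / g m"
    using tail_integral_ratio_le[OF _ \<open>m \<ge> 0\<close> \<open>B > m\<close> _ exch] assms(8) unfolding g by simp
  with \<open>g B / g m < \<epsilon>\<close> show ?thesis
    by linarith
qed

end
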